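(* Let $G$ be a finite simple graph. If the independence attractor $\mathcal{A}(G)$ is a line segment, then $\mathcal{A}(G)=\mathcal{J}(P_G)$, where $P_G=I_G-1$; i.e. the independence attractor coincides with the independence fractal.
   Context: For a finite simple graph $G$, the independence polynomial is $I_G(z)=\sum_{i\ge0} a_i z^i$, $a_i$ being the number of sets of $i$ pairwise non-adjacent vertices; $P_G=I_G-1$. The lexicographic product $G[H]$ has vertex set $V(G)\times V(H)$, with $(u,v)\sim(u',v')$ iff $u\sim u'$ in $G$, or $u=u'$ and $v\sim v'$ in $H$; $G^m$ is the $m$-fold lexicographic product of $G$ with itself. The independence attractor is $\mathcal{A}(G)=\lim_{m\to\infty}\{z: I_{G^m}(z)=0\}$ in the Hausdorff metric on compact subsets of $\mathbb{C}$. For a polynomial $P$ of degree at least two, $\mathcal{J}(P)$ is the boundary of $\{z: (P^n(z))_{n>0}\text{ bounded}\}$. The independence fractal $\mathcal{F}(G)$ equals $\mathcal{J}(P_G)$ for $G\ne K_1$. *)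

theory Defs
  imports "HOL-Analysis.Analysis"
begin

definition finite_simple_graph :: "'a set \<Rightarrow> ('a \<Rightarrow> 'a \<Rightarrow> bool) \<Rightarrow> bool" where
  "finite_simple_graph V E \<longleftrightarrow> finite V \<and>
     (\<forall>x y. E x y \<longrightarrow> x \<in> V \<and> y \<in> V) \<and>
     (\<forall>x y. E x y \<longrightarrow> E y x) \<and> (\<forall>x. \<not> E x x)"

definition independent_set :: "'a set \<Rightarrow> ('a \<Rightarrow> 'a \<Rightarrow> bool) \<Rightarrow> 'a set \<Rightarrow> bool" where
  "independent_set V E S \<longleftrightarrow> S \<subseteq> V \<and> (\<forall>x\<in>S. \<forall>y\<in>S. \<not> E x y)"

definition indep_poly :: "'a set \<Rightarrow> ('a \<Rightarrow> 'a \<Rightarrow> bool) \<Rightarrow> complex \<Rightarrow> complex" where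
  "indep_poly V E z = (\<Sum>S\<in>{S. independent_set V E S}. z ^ card S)"

text \<open>m-fold lexicographic power G^m: vertices are lists of length m over V;
  adjacency of (u#xs) and (v#ys) is: u ~ v in G, or u = v and xs ~ ys in G^(m-1).
  This is exactly G[G^(m-1)].\<close>
definition lex_pow_V :: "'a set \<Rightarrow> nat \<Rightarrow> 'a list set" where
  "lex_pow_V V m = {xs. length xs = m \<and> set xs \<subseteq> V}"

fun lex_pow_E :: "('a \<Rightarrow> 'a \<Rightarrow> bool) \<Rightarrow> 'a list \<Rightarrow> 'a list \<Rightarrow> bool" where
  "lex_pow_E E (u # xs) (v # ys) = (E u v \<or> (u = v \<and> lex_pow_E E xs ys))"
| "lex_pow_E E _ _ = False"

definition indep_roots :: "'a set \<Rightarrow> ('a \<Rightarrow> 'a \<Rightarrow> bool) \<Rightarrow> nat \<Rightarrow> complex set" where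
  "indep_roots V E m = {z. indep_poly (lex_pow_V V m) (lex_pow_E E) z = 0}"

definition hausdorff_dist :: "'b::metric_space set \<Rightarrow> 'b set \<Rightarrow> real" where
  "hausdorff_dist S T = max (SUP x\<in>S. infdist x T) (SUP y\<in>T. infdist y S)"

definition is_indep_attractor :: "'a set \<Rightarrow> ('a \<Rightarrow> 'a \<Rightarrow> bool) \<Rightarrow> complex set \<Rightarrow> bool" where
  "is_indep_attractor V E A \<longleftrightarrow> compact A \<and> A \<noteq> {} \<and>
     ((\<lambda>m. hausdorff_dist (indep_roots V E m) A) \<longlongrightarrow> 0) sequentially"

definition julia :: "(complex \<Rightarrow> complex) \<Rightarrow> complex set" where
  "julia P = frontier {z. bounded (range (\<lambda>n. (P ^^ n) z))}"

end

(*
  Independence polynomials compose under the lexicographic product, I_{G[H]} = I_G(I_H - 1), so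
  I_{G^m} = P^m + 1 for P = P_G and the zero sets of I_{G^m} are the iterated preimages P^{-m}(-1).
  For G = K_1 the polynomial P is the identity and the attractor is the point -1. Otherwise P has
  an escape radius, and a Hausdorff limit A of the sets P^{-m}(-1) is completely invariant:
  P(A) is contained in A by continuity of P, and the preimage of A in A by the open mapping
  theorem. Boundedness and forward invariance put A inside the filled Julia set K. By backward
  invariance the iterates omit two points of A on the complement of A, so by Montel's theorem
  J = frontier K lies inside A. If A lies on a line, so does J; a bounded set whose frontier lies on a line lies on
  that line itself, so K has empty interior, K = J, and A = J.
*)
theory Submission
  imports Defs "HOL-Complex_Analysis.Complex_Analysis"
    "HOL-Computational_Algebra.Fundamental_Theorem_Algebra"
begin

section \<open>Independence polynomials of lexicographic powers\<close>

definition lex_adj :: "('a \<Rightarrow> 'a \<Rightarrow> bool) \<Rightarrow> ('b \<Rightarrow> 'b \<Rightarrow> bool) \<Rightarrow> 'a \<times> 'b \<Rightarrow> 'a \<times> 'b \<Rightarrow> bool" where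
  "lex_adj E F p q \<longleftrightarrow> E (fst p) (fst q) \<or> (fst p = fst q \<and> F (snd p) (snd q))"

definition nonempty_independent_sets :: "'a set \<Rightarrow> ('a \<Rightarrow> 'a \<Rightarrow> bool) \<Rightarrow> 'a set set" where
  "nonempty_independent_sets V E = {S. independent_set V E S} - {{}}"

lemma finite_independent_sets: "finite V \<Longrightarrow> finite {S. independent_set V E S}"
  unfolding independent_set_def by (rule finite_subset[of _ "Pow V"]) auto

lemma finite_independent_set: "finite V \<Longrightarrow> independent_set V E S \<Longrightarrow> finite S"
  unfolding independent_set_def by (blast intro: finite_subset)

lemma finite_nonempty_independent_sets: "finite V \<Longrightarrow> finite (nonempty_independent_sets V E)"
  by (simp add: nonempty_independent_sets_def finite_independent_sets)

lemma indep_poly_minus_one: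
  assumes "finite V"
  shows "indep_poly V E z - 1 = (\<Sum>S\<in>nonempty_independent_sets V E. z ^ card S)"
proof -
  have "{} \<in> {S. independent_set V E S}" by (simp add: independent_set_def)
  then show ?thesis
    unfolding indep_poly_def nonempty_independent_sets_def
    by (simp add: sum.remove[OF finite_independent_sets[OF assms]])
qed

lemma independent_set_lex_adj_iff:
  "independent_set (V \<times> W) (lex_adj E F) S \<longleftrightarrow>
     independent_set V E (fst ` S) \<and> (\<forall>v\<in>fst ` S. independent_set W F (S `` {v}))"
proof
  assume "independent_set (V \<times> W) (lex_adj E F) S"
  then have sub: "S \<subseteq> V \<times> W" and indep: "\<And>p q. p \<in> S \<Longrightarrow> q \<in> S \<Longrightarrow> \<not> lex_adj E F p q"
    by (auto simp: independent_set_def)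
  have "\<not> E u u'" if u: "u \<in> fst ` S" "u' \<in> fst ` S" for u u'
  proof -
    obtain x x' where "(u, x) \<in> S" "(u', x') \<in> S" using u by force
    from indep[OF this] show ?thesis by (simp add: lex_adj_def)
  qed
  moreover have "\<not> F x x'" if "(v, x) \<in> S" "(v, x') \<in> S" for v x x'
    using indep[OF that] by (simp add: lex_adj_def)
  ultimately show "independent_set V E (fst ` S) \<and> (\<forall>v\<in>fst ` S. independent_set W F (S `` {v}))"
    using sub by (auto simp: independent_set_def)
next
  assume rhs: "independent_set V E (fst ` S) \<and> (\<forall>v\<in>fst ` S. independent_set W F (S `` {v}))"
  have "\<not> lex_adj E F (u, x) (u', x')" if "(u, x) \<in> S" "(u', x') \<in> S" for u x u' x'
  proof -
    have u: "u \<in> fst ` S" "u' \<in> fst ` S" using that by force+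
    then have "\<not> E u u'" using rhs unfolding independent_set_def by blast
    moreover have "u = u' \<Longrightarrow> \<not> F x x'" using rhs that u by (auto simp: independent_set_def)
    ultimately show ?thesis by (simp add: lex_adj_def)
  qed
  moreover have "S \<subseteq> V \<times> W"
  proof
    fix p assume "p \<in> S"
    then have "fst p \<in> fst ` S" "snd p \<in> S `` {fst p}" by (force, simp)
    then show "p \<in> V \<times> W" using rhs unfolding independent_set_def mem_Times_iff by blast
  qed
  ultimately show "independent_set (V \<times> W) (lex_adj E F) S"
    by (auto simp: independent_set_def)
qed

lemma independent_sets_lex_adj_bij:
  "bij_betw (\<lambda>(T, g). Sigma T g)
     (SIGMA T:{T. independent_set V E T}. T \<rightarrow>\<^sub>E nonempty_independent_sets W F)
     {S. independent_set (V \<times> W) (lex_adj E F) S}"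
proof (rule bij_betwI[where g = "\<lambda>S. (fst ` S, \<lambda>v\<in>fst ` S. S `` {v})"])
  have fibre: "Sigma T g `` {v} = g v" if "v \<in> T" for T g v
    using that by auto
  have base: "fst ` Sigma T g = T" if "g \<in> T \<rightarrow>\<^sub>E nonempty_independent_sets W F" for T g
    using that by (force simp: nonempty_independent_sets_def)
  show "(\<lambda>(T, g). Sigma T g) \<in> (SIGMA T:{T. independent_set V E T}. T \<rightarrow>\<^sub>E nonempty_independent_sets W F)
      \<rightarrow> {S. independent_set (V \<times> W) (lex_adj E F) S}"
  proof (clarsimp)
    fix T g assume "independent_set V E T" and g: "g \<in> T \<rightarrow>\<^sub>E nonempty_independent_sets W F"
    then show "independent_set (V \<times> W) (lex_adj E F) (Sigma T g)"
      unfolding independent_set_lex_adj_iff base[OF g]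
      by (simp add: fibre PiE_iff nonempty_independent_sets_def)
  qed
  show "(\<lambda>S. (fst ` S, \<lambda>v\<in>fst ` S. S `` {v})) \<in> {S. independent_set (V \<times> W) (lex_adj E F) S}
      \<rightarrow> (SIGMA T:{T. independent_set V E T}. T \<rightarrow>\<^sub>E nonempty_independent_sets W F)"
  proof
    fix S assume "S \<in> {S. independent_set (V \<times> W) (lex_adj E F) S}"
    then have "independent_set V E (fst ` S)" "\<And>v. v \<in> fst ` S \<Longrightarrow> independent_set W F (S `` {v})"
      by (auto simp: independent_set_lex_adj_iff)
    moreover have "\<And>v. v \<in> fst ` S \<Longrightarrow> S `` {v} \<noteq> {}" by force
    ultimately show "(fst ` S, \<lambda>v\<in>fst ` S. S `` {v})
        \<in> (SIGMA T:{T. independent_set V E T}. T \<rightarrow>\<^sub>E nonempty_independent_sets W F)"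
      by (simp add: nonempty_independent_sets_def)
  qed
  show "(\<lambda>S. (fst ` S, \<lambda>v\<in>fst ` S. S `` {v})) ((\<lambda>(T, g). Sigma T g) x) = x"
    if "x \<in> (SIGMA T:{T. independent_set V E T}. T \<rightarrow>\<^sub>E nonempty_independent_sets W F)" for x
    using that by (auto simp: fibre base PiE_iff extensional_def fun_eq_iff)
  show "(\<lambda>(T, g). Sigma T g) ((\<lambda>S. (fst ` S, \<lambda>v\<in>fst ` S. S `` {v})) S) = S" for S
  proof -
    have "(SIGMA v:fst ` S. (\<lambda>v\<in>fst ` S. S `` {v}) v) = (SIGMA v:fst ` S. S `` {v})"
      by (rule Sigma_cong) simp_all
    also have "\<dots> = S"
      by (auto intro: rev_image_eqI)
    finally show ?thesis by (simp only: prod.case)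
  qed
qed

lemma indep_poly_lex_adj:
  assumes V: "finite V" and W: "finite W"
  shows "indep_poly (V \<times> W) (lex_adj E F) z = indep_poly V E (indep_poly W F z - 1)"
proof -
  define NS where "NS = nonempty_independent_sets W F"
  define IS where "IS = {T. independent_set V E T}"
  have fin_IS: "finite IS" and fin_NS: "finite NS"
    unfolding IS_def NS_def by (simp_all add: V W finite_independent_sets finite_nonempty_independent_sets)
  have fin_T: "finite T" if "T \<in> IS" for T
    using that finite_independent_set[OF V] by (simp add: IS_def)
  have fin_U: "finite U" if "U \<in> NS" for U
    using that by (auto simp: NS_def nonempty_independent_sets_def intro: finite_independent_set[OF W])
  have "indep_poly V E (indep_poly W F z - 1) = (\<Sum>T\<in>IS. \<Prod>v\<in>T. \<Sum>U\<in>NS. z ^ card U)"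
    unfolding indep_poly_minus_one[OF W] by (simp add: indep_poly_def IS_def NS_def)
  also have "\<dots> = (\<Sum>T\<in>IS. \<Sum>g\<in>T \<rightarrow>\<^sub>E NS. \<Prod>v\<in>T. z ^ card (g v))"
    by (intro sum.cong refl prod_sum_PiE fin_T fin_NS)
  also have "\<dots> = (\<Sum>T\<in>IS. \<Sum>g\<in>T \<rightarrow>\<^sub>E NS. z ^ card (Sigma T g))"
  proof (intro sum.cong refl)
    fix T g assume T: "T \<in> IS" and g: "g \<in> T \<rightarrow>\<^sub>E NS"
    have "card (Sigma T g) = (\<Sum>v\<in>T. card (g v))"
      using fin_T[OF T] g fin_U by (intro card_SigmaI) (auto simp: PiE_iff)
    then show "(\<Prod>v\<in>T. z ^ card (g v)) = z ^ card (Sigma T g)"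
      by (simp add: power_sum)
  qed
  also have "\<dots> = (\<Sum>(T, g)\<in>(SIGMA T:IS. T \<rightarrow>\<^sub>E NS). z ^ card (Sigma T g))"
    by (rule sum.Sigma) (use fin_IS fin_T fin_NS in \<open>auto intro: finite_PiE\<close>)
  also have "\<dots> = (\<Sum>S | independent_set (V \<times> W) (lex_adj E F) S. z ^ card S)"
    using sum.reindex_bij_betw[OF independent_sets_lex_adj_bij, where g = "\<lambda>S. z ^ card S"]
    by (simp add: IS_def NS_def case_prod_beta')
  finally show ?thesis by (simp add: indep_poly_def)
qed

lemma indep_poly_image:
  assumes inj: "inj_on h X" and adj: "\<And>x y. x \<in> X \<Longrightarrow> y \<in> X \<Longrightarrow> E' (h x) (h y) \<longleftrightarrow> E x y"
  shows "indep_poly (h ` X) E' z = indep_poly X E z"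
proof -
  have "bij_betw (image h) {S. independent_set X E S} {S. independent_set (h ` X) E' S}"
  proof (rule bij_betw_byWitness[where f' = "\<lambda>S. X \<inter> h -` S"])
    show "image h ` {S. independent_set X E S} \<subseteq> {S. independent_set (h ` X) E' S}"
      using adj by (auto simp: independent_set_def subset_iff)
    show "(\<lambda>S. X \<inter> h -` S) ` {S. independent_set (h ` X) E' S} \<subseteq> {S. independent_set X E S}"
      using adj by (auto simp: independent_set_def) metis
  qed (use inj in \<open>auto simp: independent_set_def inj_on_def\<close>)
  moreover have "card (h ` S) = card S" if "independent_set X E S" for S
    using that inj by (auto simp: independent_set_def intro: card_image inj_on_subset)
  ultimately show ?thesis
    unfolding indep_poly_def by (simp add: sum.reindex_bij_betw[symmetric])
qed

lemma lex_pow_V_Suc: "lex_pow_V V (Suc m) = (\<lambda>(u, xs). u # xs) ` (V \<times> lex_pow_V V m)"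
  by (auto simp: lex_pow_V_def length_Suc_conv image_iff)

lemma finite_lex_pow_V: "finite V \<Longrightarrow> finite (lex_pow_V V m)"
  using finite_lists_length_eq[of V m] by (simp add: lex_pow_V_def conj_commute)

lemma indep_poly_lex_pow_Suc:
  assumes "finite V"
  shows "indep_poly (lex_pow_V V (Suc m)) (lex_pow_E E) z =
    indep_poly V E (indep_poly (lex_pow_V V m) (lex_pow_E E) z - 1)"
proof -
  have "indep_poly (lex_pow_V V (Suc m)) (lex_pow_E E) z =
      indep_poly (V \<times> lex_pow_V V m) (lex_adj E (lex_pow_E E)) z"
    unfolding lex_pow_V_Suc by (rule indep_poly_image) (auto simp: inj_on_def lex_adj_def)
  then show ?thesis
    by (simp add: indep_poly_lex_adj assms finite_lex_pow_V)
qed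

lemma indep_poly_lex_pow_0: "indep_poly (lex_pow_V V 0) (lex_pow_E E) z = 1 + z"
proof -
  have "lex_pow_V V 0 = {[]}" by (auto simp: lex_pow_V_def)
  moreover have "{S. independent_set {[]} (lex_pow_E E) S} = {{}, {[]}}"
    by (auto simp: independent_set_def)
  ultimately show ?thesis by (simp add: indep_poly_def)
qed

lemma indep_poly_lex_pow:
  assumes "finite V"
  shows "indep_poly (lex_pow_V V m) (lex_pow_E E) z = ((\<lambda>z. indep_poly V E z - 1) ^^ m) z + 1"
  by (induction m) (simp_all add: indep_poly_lex_pow_0 indep_poly_lex_pow_Suc assms)

section \<open>Hausdorff distance\<close>

lemma infdist_less_imp_dist_less:
  assumes "X \<noteq> {}" "infdist x X < d"
  obtains y where "y \<in> X" "dist x y < d"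
proof -
  have "Inf ((\<lambda>y. dist x y) ` X) < d" using assms by (simp add: infdist_notempty)
  with cInf_lessD[of "(\<lambda>y. dist x y) ` X" d] assms(1) that show thesis by blast
qed

lemma hausdorff_dist_commute: "hausdorff_dist X Y = hausdorff_dist Y X"
  by (simp add: hausdorff_dist_def max.commute)

lemma infdist_le_hausdorff_dist:
  assumes "x \<in> X" "bounded X" "Y \<noteq> {}"
  shows "infdist x Y \<le> hausdorff_dist X Y"
proof -
  obtain y0 where y0: "y0 \<in> Y" using assms(3) by blast
  obtain e where e: "\<And>x'. x' \<in> X \<Longrightarrow> dist y0 x' \<le> e"
    using assms(2) bounded_any_center[of X y0] by blast
  have "bdd_above ((\<lambda>x'. infdist x' Y) ` X)"
  proof (rule bdd_aboveI2)
    fix x' assume "x' \<in> X"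
    have "infdist x' Y \<le> dist x' y0" by (rule infdist_le[OF y0])
    also have "\<dots> \<le> e" using e[OF \<open>x' \<in> X\<close>] by (simp add: dist_commute)
    finally show "infdist x' Y \<le> e" .
  qed
  then have "infdist x Y \<le> (SUP x'\<in>X. infdist x' Y)" by (rule cSUP_upper[OF assms(1)])
  then show ?thesis by (simp add: hausdorff_dist_def)
qed

lemma hausdorff_dist_tendsto_0_imp_close:
  assumes lim: "(\<lambda>m. hausdorff_dist (X m) A) \<longlonglongrightarrow> 0"
    and X: "\<And>m. bounded (X m)" "\<And>m. X m \<noteq> {}" and A: "bounded A" "A \<noteq> {}" and "0 < e"
  shows "eventually (\<lambda>m. (\<forall>x\<in>A. \<exists>y\<in>X m. dist x y < e) \<and> (\<forall>x\<in>X m. \<exists>y\<in>A. dist x y < e))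
    sequentially"
  using order_tendstoD(2)[OF lim \<open>0 < e\<close>]
proof eventually_elim
  case (elim m)
  have "\<exists>y\<in>X m. dist x y < e" if "x \<in> A" for x
  proof -
    have "infdist x (X m) < e"
      using infdist_le_hausdorff_dist[OF that A(1) X(2)[of m]] elim by (simp add: hausdorff_dist_commute)
    with infdist_less_imp_dist_less[OF X(2)] show ?thesis by blast
  qed
  moreover have "\<exists>y\<in>A. dist x y < e" if "x \<in> X m" for x
  proof -
    have "infdist x A < e"
      using infdist_le_hausdorff_dist[OF that X(1) A(2)] elim by simp
    with infdist_less_imp_dist_less[OF A(2)] show ?thesis by blast
  qed
  ultimately show ?case by blast
qed

section \<open>Sets with frontier in an affine subspace\<close>

lemma affine_ray_disjoint:
  fixes x y :: "'a::real_vector"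
  assumes "affine L" "y \<in> L" "x \<notin> L" "0 \<le> t"
  shows "x + t *\<^sub>R (x - y) \<notin> L"
proof
  assume "x + t *\<^sub>R (x - y) \<in> L"
  with assms(1,2) have "(1 / (1 + t)) *\<^sub>R (x + t *\<^sub>R (x - y)) + (t / (1 + t)) *\<^sub>R y \<in> L"
    unfolding affine_def using \<open>0 \<le> t\<close> by (simp add: add_divide_distrib[symmetric])
  also have "(1 / (1 + t)) *\<^sub>R (x + t *\<^sub>R (x - y)) + (t / (1 + t)) *\<^sub>R y =
      (1 / (1 + t)) *\<^sub>R (x + t *\<^sub>R (x - y) + t *\<^sub>R y)"
    by (simp add: scaleR_add_right)
  also have "x + t *\<^sub>R (x - y) + t *\<^sub>R y = (1 + t) *\<^sub>R x"
    by (simp add: algebra_simps)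
  also have "(1 / (1 + t)) *\<^sub>R ((1 + t) *\<^sub>R x) = x"
    using \<open>0 \<le> t\<close> by simp
  finally show False using assms(3) by simp
qed

lemma frontier_subset_affine_imp_subset:
  fixes K L :: "'a::real_normed_vector set"
  assumes "bounded K" "affine L" "L \<noteq> {}" "frontier K \<subseteq> L"
  shows "K \<subseteq> L"
proof
  fix x assume "x \<in> K"
  show "x \<in> L"
  proof (rule ccontr)
    assume "x \<notin> L"
    obtain y where "y \<in> L" using assms(3) by blast
    \<comment> \<open>the ray from \<open>y\<close> through \<open>x\<close>, beyond \<open>x\<close>, misses \<open>L\<close> but leaves the bounded set \<open>K\<close>\<close>
    define C where "C = (\<lambda>t. x + t *\<^sub>R (x - y)) ` {0..}"
    have "connected C"
      unfolding C_def by (intro connected_continuous_image continuous_intros) (simp add: is_interval_connected)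
    have "\<not> bounded C"
    proof
      assume "bounded C"
      then obtain e where e: "\<And>c. c \<in> C \<Longrightarrow> dist x c \<le> e" using bounded_any_center by blast
      define t where "t = (\<bar>e\<bar> + 1) / norm (x - y)"
      have "x \<noteq> y" using \<open>x \<notin> L\<close> \<open>y \<in> L\<close> by blast
      then have "0 \<le> t" "dist x (x + t *\<^sub>R (x - y)) = \<bar>e\<bar> + 1"
        by (simp_all add: t_def dist_norm)
      moreover have "x + t *\<^sub>R (x - y) \<in> C"
        unfolding C_def using \<open>0 \<le> t\<close> by (intro image_eqI[where x = t]) auto
      ultimately show False using e by fastforce
    qed
    then have "C - K \<noteq> {}" using assms(1) bounded_subset by blast
    moreover have "C \<inter> K \<noteq> {}"
      using \<open>x \<in> K\<close> by (auto simp: C_def intro!: image_eqI[where x = 0])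
    ultimately have "C \<inter> frontier K \<noteq> {}" using connected_Int_frontier[OF \<open>connected C\<close>] by blast
    moreover have "C \<inter> L = {}"
      using affine_ray_disjoint[OF assms(2) \<open>y \<in> L\<close> \<open>x \<notin> L\<close>] by (auto simp: C_def)
    ultimately show False using assms(4) by blast
  qed
qed

section \<open>Filled Julia sets\<close>

definition filled_julia :: "('a::metric_space \<Rightarrow> 'a) \<Rightarrow> 'a set" where
  "filled_julia f = {z. bounded (range (\<lambda>n. (f ^^ n) z))}"

lemma julia_eq_frontier_filled_julia: "julia f = frontier (filled_julia f)"
  by (simp add: julia_def filled_julia_def)

lemma funpow_in_filled_julia:
  assumes "z \<in> filled_julia f"
  shows "(f ^^ n) z \<in> filled_julia f"
proof -
  have "(f ^^ k) ((f ^^ n) z) = (f ^^ (k + n)) z" for k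
    by (simp add: funpow_add)
  then have "range (\<lambda>k. (f ^^ k) ((f ^^ n) z)) \<subseteq> range (\<lambda>k. (f ^^ k) z)"
    by (auto intro: range_eqI)
  then show ?thesis using assms bounded_subset by (auto simp: filled_julia_def)
qed

lemma bounded_forward_invariant_subset_filled_julia:
  assumes "bounded S" "\<And>z. z \<in> S \<Longrightarrow> f z \<in> S"
  shows "S \<subseteq> filled_julia f"
proof
  fix z assume "z \<in> S"
  then have "(f ^^ n) z \<in> S" for n by (induction n) (simp_all add: assms(2))
  then have "range (\<lambda>n. (f ^^ n) z) \<subseteq> S" by blast
  then show "z \<in> filled_julia f" using assms(1) bounded_subset by (auto simp: filled_julia_def)
qed

lemma holomorphic_on_funpow:
  assumes "f holomorphic_on UNIV"
  shows "(f ^^ n) holomorphic_on UNIV"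
proof (induction n)
  case (Suc n)
  have "(f \<circ> (f ^^ n)) holomorphic_on UNIV"
    using Suc assms by (rule holomorphic_on_compose_gen) simp
  then show ?case by (simp only: funpow.simps(2))
qed (simp add: holomorphic_on_ident[unfolded id_def])

text \<open>Montel's theorem in the form of Great Picard's \<open>GPicard1\<close>: iterates omitting two values on
  a disc form a normal family, so their boundedness at the centre propagates to a neighbourhood.\<close>
lemma interior_filled_julia_if_iterates_omit:
  fixes f :: "complex \<Rightarrow> complex"
  assumes holf: "f holomorphic_on UNIV" and z: "z \<in> filled_julia f" and "0 < r" "a \<noteq> b"
    and omit: "\<And>n u. u \<in> ball z r \<Longrightarrow> (f ^^ n) u \<noteq> a \<and> (f ^^ n) u \<noteq> b"
  shows "z \<in> interior (filled_julia f)"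
proof -
  define g where "g n u = ((f ^^ n) u - a) / (b - a)" for n u
  have iterate_eq: "(f ^^ n) u = a + (b - a) * g n u" for n u
    using \<open>a \<noteq> b\<close> by (simp add: g_def)
  have hol: "g n holomorphic_on ball z r" for n
    unfolding g_def using holomorphic_on_funpow[OF holf, of n]
    by (auto intro!: holomorphic_intros intro: holomorphic_on_subset)
  have omit01: "g n u \<noteq> 0 \<and> g n u \<noteq> 1" if "u \<in> ball z r" for n u
    using omit[OF that, of n] \<open>a \<noteq> b\<close> by (auto simp: g_def)
  obtain B where "B > 0" and B: "\<And>n. norm ((f ^^ n) z) \<le> B"
    using z by (auto simp: filled_julia_def bounded_pos)
  have bound_z: "norm (g n z) \<le> (B + norm a) / norm (b - a)" for n
    using \<open>a \<noteq> b\<close> B[of n] norm_triangle_ineq4[of "(f ^^ n) z" a]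
    by (auto simp: g_def norm_divide intro!: divide_right_mono)
  obtain B' Z where "open Z" "z \<in> Z" "Z \<subseteq> ball z r"
    and B': "\<And>h u. h \<in> range g \<Longrightarrow> u \<in> Z \<Longrightarrow> norm (h u) \<le> B'"
  proof (rule GPicard1[where S = "ball z r" and X = "range g" and Y = "range g"])
    show "0 < (B + norm a) / norm (b - a)" using \<open>B > 0\<close> \<open>a \<noteq> b\<close> by (intro divide_pos_pos add_pos_nonneg) auto
  qed (use \<open>0 < r\<close> hol omit01 bound_z in auto)
  have "Z \<subseteq> filled_julia f"
  proof
    fix u assume "u \<in> Z"
    have "norm ((f ^^ n) u) \<le> norm a + norm (b - a) * B'" for n
      unfolding iterate_eq using B'[of "g n" u] \<open>u \<in> Z\<close>
      by (auto intro!: norm_triangle_le simp: norm_mult mult_left_mono)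
    then show "u \<in> filled_julia f" by (auto simp: filled_julia_def bounded_iff)
  qed
  with \<open>open Z\<close> \<open>z \<in> Z\<close> show ?thesis using interior_maximal by blast
qed

locale escaping_poly =
  fixes p :: "complex poly" and R :: real
  assumes radius_pos: "0 < R"
    and escape: "\<And>z. R \<le> norm z \<Longrightarrow> 2 * norm z \<le> norm (poly p z)"
begin

lemma escape_funpow: "R \<le> norm z \<Longrightarrow> 2 ^ n * norm z \<le> norm ((poly p ^^ n) z)"
proof (induction n)
  case (Suc n)
  have "R \<le> norm z" by fact
  also have "\<dots> \<le> 2 ^ n * norm z" by (simp add: mult_le_cancel_right1 one_le_power)
  also have "\<dots> \<le> norm ((poly p ^^ n) z)" using Suc by simp
  finally have "2 * norm ((poly p ^^ n) z) \<le> norm ((poly p ^^ Suc n) z)" by (simp add: escape)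
  then show ?case using Suc by simp
qed simp

lemma not_in_filled_julia: "R \<le> norm z \<Longrightarrow> z \<notin> filled_julia (poly p)"
proof
  assume "R \<le> norm z" "z \<in> filled_julia (poly p)"
  then obtain B where B: "\<And>n. norm ((poly p ^^ n) z) \<le> B" by (auto simp: filled_julia_def bounded_iff)
  obtain n where "B / R < 2 ^ n" using real_arch_pow[of 2 "B / R"] by auto
  then have "B < 2 ^ n * R" using radius_pos by (simp add: divide_less_eq)
  also have "\<dots> \<le> 2 ^ n * norm z" using \<open>R \<le> norm z\<close> by simp
  also have "\<dots> \<le> norm ((poly p ^^ n) z)" using escape_funpow[OF \<open>R \<le> norm z\<close>] .
  finally show False using B[of n] by simp
qed

lemma filled_julia_subset_ball: "filled_julia (poly p) \<subseteq> ball 0 R"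
  using not_in_filled_julia by (force simp: not_le)

lemma bounded_filled_julia: "bounded (filled_julia (poly p))"
  using filled_julia_subset_ball bounded_ball bounded_subset by blast

lemma closed_filled_julia: "closed (filled_julia (poly p))"
proof -
  have "filled_julia (poly p) = (\<Inter>n. {z. norm ((poly p ^^ n) z) \<le> R})"
  proof (intro equalityI subsetI)
    fix z assume "z \<in> filled_julia (poly p)"
    then have "(poly p ^^ n) z \<in> ball 0 R" for n
      using funpow_in_filled_julia filled_julia_subset_ball by blast
    then show "z \<in> (\<Inter>n. {z. norm ((poly p ^^ n) z) \<le> R})" by (simp add: less_imp_le)
  qed (auto simp: filled_julia_def bounded_iff)
  moreover have "continuous_on UNIV (poly p ^^ n)" for n
    by (intro holomorphic_on_imp_continuous_on holomorphic_on_funpow poly_holomorphic_on holomorphic_on_ident)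
  ultimately show ?thesis
    by (auto intro!: closed_INT closed_Collect_le continuous_intros)
qed

lemma poly_ne_poly_0: "\<exists>z. poly p z \<noteq> poly p 0"
proof
  define z where "z = complex_of_real (R + norm (poly p 0))"
  have z: "norm z = R + norm (poly p 0)"
    unfolding z_def norm_of_real using radius_pos by simp
  with escape[of z] radius_pos have "norm (poly p 0) < norm (poly p z)"
    using norm_ge_zero[of "poly p 0"] by linarith
  then show "poly p z \<noteq> poly p 0" by auto
qed

lemma not_constant_on_poly: "\<not> poly p constant_on UNIV"
  unfolding constant_on_def using poly_ne_poly_0 by (metis UNIV_I)

lemma surj_poly: "\<exists>z. poly p z = y"
proof -
  have "\<not> constant (poly (p - [:y:]))"
    using poly_ne_poly_0 by (auto simp: constant_def)
  then obtain z where "poly (p - [:y:]) z = 0" using fundamental_theorem_of_algebra by blast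
  then show ?thesis by auto
qed

lemma surj_funpow: "\<exists>z. (poly p ^^ n) z = y"
proof (induction n arbitrary: y)
  case (Suc n)
  obtain u where "(poly p ^^ n) u = y" using Suc by blast
  moreover obtain z where "poly p z = u" using surj_poly by blast
  ultimately show ?case by (metis comp_apply funpow_Suc_right)
qed simp

lemma bounded_funpow_preimage: "bounded {z. (poly p ^^ n) z = y}"
proof -
  have "norm z \<le> max R (norm y)" if "(poly p ^^ n) z = y" for z
  proof (cases "R \<le> norm z")
    case True
    have "norm z \<le> 2 ^ n * norm z" by (simp add: mult_le_cancel_right1 one_le_power)
    also have "\<dots> \<le> norm y" using escape_funpow[OF True, of n] that by simp
    finally show ?thesis by simp
  qed simp
  then show ?thesis by (auto simp: bounded_iff)
qed

lemma julia_subset_backward_invariant: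
  assumes "closed S" "a \<in> S" "b \<in> S" "a \<noteq> b" and backward: "\<And>z. poly p z \<in> S \<Longrightarrow> z \<in> S"
  shows "julia (poly p) \<subseteq> S"
proof
  fix z assume z: "z \<in> julia (poly p)"
  show "z \<in> S"
  proof (rule ccontr)
    assume "z \<notin> S"
    then obtain r where "0 < r" and r: "ball z r \<subseteq> - S"
      using \<open>closed S\<close> open_contains_ball[of "- S"] by (auto simp: open_Compl)
    have backward_funpow: "u \<in> S" if "(poly p ^^ n) u \<in> S" for n u
      using that
    proof (induction n arbitrary: u)
      case (Suc n)
      have "(poly p ^^ n) (poly p u) \<in> S"
        using Suc.prems by (simp add: funpow_Suc_right del: funpow.simps)
      then show ?case using Suc.IH backward by blast
    qed simp
    have omit: "(poly p ^^ n) u \<noteq> a \<and> (poly p ^^ n) u \<noteq> b" if "u \<in> ball z r" for n u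
      using that r backward_funpow[of n u] assms(2,3) by blast
    have "z \<in> filled_julia (poly p)"
      using z closed_filled_julia frontier_subset_closed
      unfolding julia_eq_frontier_filled_julia by blast
    then have "z \<in> interior (filled_julia (poly p))"
      using interior_filled_julia_if_iterates_omit[OF poly_holomorphic_on[OF holomorphic_on_ident]
            _ \<open>0 < r\<close> \<open>a \<noteq> b\<close> omit] by blast
    with z show False by (simp add: julia_eq_frontier_filled_julia frontier_def)
  qed
qed

lemma filled_julia_eq_julia_if_collinear:
  assumes "collinear (julia (poly p))"
  shows "filled_julia (poly p) = julia (poly p)"
proof -
  obtain u v where uv: "frontier (filled_julia (poly p)) \<subseteq> affine hull {u, v}"
    using assms unfolding collinear_affine_hull julia_eq_frontier_filled_julia by blast
  have "filled_julia (poly p) \<subseteq> affine hull {u, v}"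
    by (rule frontier_subset_affine_imp_subset[OF bounded_filled_julia affine_affine_hull _ uv]) simp
  then have "interior (filled_julia (poly p)) \<subseteq> interior (affine hull {u, v})"
    by (rule interior_mono)
  also have "\<dots> = {}"
    by (rule empty_interior_affine_hull) (simp_all add: card_insert_if)
  finally have "interior (filled_julia (poly p)) = {}" by (simp only: subset_empty)
  then show ?thesis
    unfolding julia_eq_frontier_filled_julia frontier_def closure_closed[OF closed_filled_julia] by simp
qed

end

section \<open>Hausdorff limits of iterated preimages\<close>

locale preimage_limit = escaping_poly +
  fixes w :: complex and A :: "complex set"
  assumes compact_limit: "compact A" and limit_nonempty: "A \<noteq> {}"
    and limit: "(\<lambda>m. hausdorff_dist {z. (poly p ^^ m) z = w} A) \<longlonglongrightarrow> 0"
begin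

lemma closed_limit: "closed A"
  using compact_limit by (rule compact_imp_closed)

lemma eventually_close_to_limit:
  assumes "0 < e"
  shows "eventually (\<lambda>m. (\<forall>x\<in>A. \<exists>y. (poly p ^^ m) y = w \<and> dist x y < e) \<and>
    (\<forall>y. (poly p ^^ m) y = w \<longrightarrow> (\<exists>x\<in>A. dist y x < e))) sequentially"
  using hausdorff_dist_tendsto_0_imp_close[OF limit bounded_funpow_preimage _
      compact_imp_bounded[OF compact_limit] limit_nonempty assms] surj_funpow
  by simp

lemma limit_near_preimages:
  assumes "x \<in> A" "0 < e"
  obtains N where "\<And>m. N \<le> m \<Longrightarrow> \<exists>y. (poly p ^^ m) y = w \<and> dist x y < e"
proof -
  obtain N where "\<forall>m\<ge>N. \<forall>x\<in>A. \<exists>y. (poly p ^^ m) y = w \<and> dist x y < e"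
    using eventually_close_to_limit[OF assms(2)] by (auto simp: eventually_sequentially)
  with assms(1) show thesis by (intro that) blast
qed

lemma preimages_near_limit:
  assumes "0 < e"
  obtains N where "\<And>m y. N \<le> m \<Longrightarrow> (poly p ^^ m) y = w \<Longrightarrow> \<exists>x\<in>A. dist y x < e"
proof -
  obtain N where "\<forall>m\<ge>N. \<forall>y. (poly p ^^ m) y = w \<longrightarrow> (\<exists>x\<in>A. dist y x < e)"
    using eventually_close_to_limit[OF assms] by (auto simp: eventually_sequentially)
  then show thesis by (intro that) blast
qed

lemma limit_forward_invariant:
  assumes "x \<in> A"
  shows "poly p x \<in> A"
proof -
  have "\<exists>y\<in>A. dist y (poly p x) < e" if "0 < e" for e
  proof -
    have "isCont (poly p) x" by simp
    then obtain d where "0 < d" and d: "\<And>u. dist u x < d \<Longrightarrow> dist (poly p u) (poly p x) < e / 2"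
      using \<open>0 < e\<close> unfolding continuous_at_eps_delta by (meson half_gt_zero)
    obtain N1 where N1: "\<And>m. N1 \<le> m \<Longrightarrow> \<exists>y. (poly p ^^ m) y = w \<and> dist x y < d"
      using limit_near_preimages[OF assms \<open>0 < d\<close>] by blast
    obtain N2 where N2: "\<And>m y. N2 \<le> m \<Longrightarrow> (poly p ^^ m) y = w \<Longrightarrow> \<exists>x\<in>A. dist y x < e / 2"
      using preimages_near_limit[of "e / 2"] \<open>0 < e\<close> by auto
    obtain u where u: "(poly p ^^ Suc (max N1 N2)) u = w" "dist x u < d"
      using N1[OF le_SucI[OF max.cobounded1]] by blast
    then have "(poly p ^^ max N1 N2) (poly p u) = w" by (simp add: funpow_Suc_right del: funpow.simps)
    then obtain y where "y \<in> A" "dist (poly p u) y < e / 2" using N2[OF max.cobounded2] by blast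
    moreover have "dist (poly p u) (poly p x) < e / 2" using d u(2) by (simp add: dist_commute)
    ultimately show ?thesis by (metis dist_commute dist_triangle_half_l)
  qed
  then show ?thesis
    using closed_limit closure_approachable closure_closed by metis
qed

lemma limit_backward_invariant:
  assumes "poly p z \<in> A"
  shows "z \<in> A"
proof -
  have "\<exists>y\<in>A. dist y z < e" if "0 < e" for e
  proof -
    have "open (poly p ` ball z (e / 2))"
      by (rule open_mapping_thm[OF poly_holomorphic_on[OF holomorphic_on_ident] open_UNIV
            connected_UNIV open_ball subset_UNIV not_constant_on_poly])
    moreover have "poly p z \<in> poly p ` ball z (e / 2)" using \<open>0 < e\<close> by simp
    ultimately obtain d where "0 < d" and d: "ball (poly p z) d \<subseteq> poly p ` ball z (e / 2)"
      by (meson open_contains_ball)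
    obtain N1 where N1: "\<And>m. N1 \<le> m \<Longrightarrow> \<exists>y. (poly p ^^ m) y = w \<and> dist (poly p z) y < d"
      using limit_near_preimages[OF assms \<open>0 < d\<close>] by blast
    obtain N2 where N2: "\<And>m y. N2 \<le> m \<Longrightarrow> (poly p ^^ m) y = w \<Longrightarrow> \<exists>x\<in>A. dist y x < e / 2"
      using preimages_near_limit[of "e / 2"] \<open>0 < e\<close> by auto
    obtain s where s: "(poly p ^^ max N1 N2) s = w" "dist (poly p z) s < d"
      using N1[OF max.cobounded1] by blast
    then have "s \<in> poly p ` ball z (e / 2)" using d by auto
    then obtain u where "u \<in> ball z (e / 2)" "s = poly p u" by blast
    then have "dist z u < e / 2" "(poly p ^^ Suc (max N1 N2)) u = w"
      using s(1) by (simp_all add: funpow_Suc_right del: funpow.simps)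
    moreover obtain y where "y \<in> A" "dist u y < e / 2"
      using N2[OF le_SucI[OF max.cobounded2] \<open>(poly p ^^ Suc (max N1 N2)) u = w\<close>] by blast
    ultimately show ?thesis by (metis dist_commute dist_triangle_half_l)
  qed
  then show ?thesis
    using closed_limit closure_approachable closure_closed by metis
qed

lemma limit_subset_filled_julia: "A \<subseteq> filled_julia (poly p)"
  by (intro bounded_forward_invariant_subset_filled_julia compact_imp_bounded[OF compact_limit]
      limit_forward_invariant)

lemma limit_eq_julia_if_collinear:
  assumes "collinear A" "a \<in> A" "b \<in> A" "a \<noteq> b"
  shows "A = julia (poly p)"
proof -
  have "julia (poly p) \<subseteq> A"
    using julia_subset_backward_invariant[OF closed_limit assms(2-4) limit_backward_invariant] .
  moreover from this have "filled_julia (poly p) = julia (poly p)"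
    using assms(1) collinear_subset filled_julia_eq_julia_if_collinear by blast
  ultimately show ?thesis using limit_subset_filled_julia by blast
qed

end

section \<open>The independence attractor\<close>

lemma escaping_poly_pCons_0:
  fixes q :: "complex poly"
  assumes "degree q \<noteq> 0 \<or> 2 \<le> norm (coeff q 0)"
  obtains R where "escaping_poly (pCons 0 q) R"
proof -
  have "\<exists>r. \<forall>z. r \<le> norm z \<longrightarrow> 2 \<le> norm (poly q z)"
  proof (cases "degree q = 0")
    case True
    then obtain c where "q = [:c:]" by (rule degree_eq_zeroE)
    with assms show ?thesis by auto
  next
    case False
    obtain c q' where q: "q = pCons c q'" by (cases q)
    with False have "q' \<noteq> 0" by auto
    then show ?thesis unfolding q by (rule poly_infinity)
  qed
  then obtain r where r: "\<And>z. r \<le> norm z \<Longrightarrow> 2 \<le> norm (poly q z)" by blast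
  have "escaping_poly (pCons 0 q) (max r 1)"
  proof
    fix z :: complex assume "max r 1 \<le> norm z"
    then have "norm z * 2 \<le> norm z * norm (poly q z)" using r by (simp add: mult_left_mono)
    then show "2 * norm z \<le> norm (poly (pCons 0 q) z)" by (simp add: norm_mult mult.commute)
  qed simp
  then show thesis by (rule that)
qed

definition indep_quotient_poly :: "'a set \<Rightarrow> ('a \<Rightarrow> 'a \<Rightarrow> bool) \<Rightarrow> complex poly" where
  "indep_quotient_poly V E = (\<Sum>S\<in>nonempty_independent_sets V E. monom 1 (card S - 1))"

lemma indep_poly_minus_one_eq_poly:
  assumes "finite V"
  shows "indep_poly V E z - 1 = poly (pCons 0 (indep_quotient_poly V E)) z"
proof -
  have "z ^ card S = z * z ^ (card S - 1)" if "S \<in> nonempty_independent_sets V E" for S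
  proof -
    have "card S \<noteq> 0"
      using that finite_independent_set[OF assms] by (auto simp: nonempty_independent_sets_def)
    then show ?thesis by (simp flip: power_Suc)
  qed
  then show ?thesis
    by (simp add: indep_poly_minus_one[OF assms] indep_quotient_poly_def poly_sum poly_monom
        sum_distrib_left)
qed

lemma card_le_card_nonempty_independent_sets:
  assumes "finite V" "\<And>v. \<not> E v v"
  shows "card V \<le> card (nonempty_independent_sets V E)"
proof (rule card_inj_on_le)
  show "inj_on (\<lambda>v. {v}) V" by simp
  show "(\<lambda>v. {v}) ` V \<subseteq> nonempty_independent_sets V E"
    using assms(2) by (auto simp: nonempty_independent_sets_def independent_set_def)
qed (simp add: assms(1) finite_nonempty_independent_sets)

lemma escaping_indep_poly:
  assumes "finite V" "\<And>v. \<not> E v v" "2 \<le> card V"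
  obtains R where "escaping_poly (pCons 0 (indep_quotient_poly V E)) R"
proof (rule escaping_poly_pCons_0)
  let ?q = "indep_quotient_poly V E"
  have "2 \<le> norm (coeff ?q 0)" if deg: "degree ?q = 0"
  proof -
    obtain c where "?q = [:c:]" using deg by (rule degree_eq_zeroE)
    then have "coeff ?q 0 = poly ?q 1" by simp
    also have "\<dots> = of_nat (card (nonempty_independent_sets V E))"
      by (simp add: indep_quotient_poly_def poly_sum poly_monom)
    finally show ?thesis
      using card_le_card_nonempty_independent_sets[of V E, OF assms(1,2)] assms(3) by simp
  qed
  then show "degree ?q \<noteq> 0 \<or> 2 \<le> norm (coeff ?q 0)" by blast
qed

lemma indep_poly_singleton: "\<not> E v v \<Longrightarrow> indep_poly {v} E z = 1 + z"
proof -
  assume "\<not> E v v"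
  then have "{S. independent_set {v} E S} = {{}, {v}}"
    by (auto simp: independent_set_def subset_singleton_iff)
  then show ?thesis by (simp add: indep_poly_def)
qed

lemma indep_attractor_singleton:
  assumes "\<not> E v v" "is_indep_attractor {v} E A"
  shows "A = {-1}"
proof -
  have "indep_roots {v} E m = {-1}" for m
  proof -
    have "(\<lambda>z. indep_poly {v} E z - 1) = id" using assms(1) by (simp add: indep_poly_singleton id_def)
    then show ?thesis
      by (auto simp: indep_roots_def indep_poly_lex_pow add_eq_0_iff2)
  qed
  then have "hausdorff_dist {-1} A = 0"
    using assms(2) by (simp add: is_indep_attractor_def LIMSEQ_const_iff)
  moreover have "bounded A" using assms(2) by (simp add: is_indep_attractor_def compact_imp_bounded)
  ultimately have "x = -1" if "x \<in> A" for x
    using infdist_le_hausdorff_dist[of x A "{-1}"] that by (simp add: hausdorff_dist_commute)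
  with assms(2) show ?thesis by (auto simp: is_indep_attractor_def)
qed

lemma indep_attractor_eq_julia_if_collinear:
  assumes "finite V" "\<And>v. \<not> E v v" "2 \<le> card V" "is_indep_attractor V E A"
    and "collinear A" "a \<in> A" "b \<in> A" "a \<noteq> b"
  shows "A = julia (\<lambda>z. indep_poly V E z - 1)"
proof -
  let ?p = "pCons 0 (indep_quotient_poly V E)"
  have P: "(\<lambda>z. indep_poly V E z - 1) = poly ?p"
    by (simp add: fun_eq_iff indep_poly_minus_one_eq_poly assms(1))
  obtain R where "escaping_poly ?p R" using escaping_indep_poly[of V E, OF assms(1-3)] .
  moreover have "indep_roots V E m = {z. (poly ?p ^^ m) z = -1}" for m
    by (auto simp: indep_roots_def indep_poly_lex_pow[OF assms(1)] P add_eq_0_iff2)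
  ultimately interpret preimage_limit ?p R "-1" A
    using assms(4) by (simp add: preimage_limit_def preimage_limit_axioms_def is_indep_attractor_def)
  show ?thesis
    using limit_eq_julia_if_collinear[OF assms(5-8)] by (simp add: P)
qed

theorem theorem3p4:
  fixes V :: "'a set" and E :: "'a \<Rightarrow> 'a \<Rightarrow> bool" and A :: "complex set"
  assumes "finite_simple_graph V E"
    and "V \<noteq> {}"
    and "is_indep_attractor V E A"
    and "\<exists>a b. a \<noteq> b \<and> A = closed_segment a b"
  shows "A = julia (\<lambda>z. indep_poly V E z - 1)"
proof -
  have fin: "finite V" and irr: "\<And>v. \<not> E v v"
    using assms(1) by (auto simp: finite_simple_graph_def)
  obtain a b where "a \<noteq> b" and A: "A = closed_segment a b" using assms(4) by blast
  then have "collinear A" "a \<in> A" "b \<in> A" by simp_all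
  show ?thesis
  proof (cases "2 \<le> card V")
    case True
    show ?thesis
      by (rule indep_attractor_eq_julia_if_collinear[OF fin irr True assms(3)]) fact+
  next
    case False
    have "0 < card V" using fin assms(2) by (simp add: card_gt_0_iff)
    with False have "card V = 1" by linarith
    then obtain v where "V = {v}" by (rule card_1_singletonE)
    then have "A = {-1}"
      using indep_attractor_singleton[of E v A] irr assms(3) by simp
    with \<open>a \<in> A\<close> \<open>b \<in> A\<close> \<open>a \<noteq> b\<close> show ?thesis by simp
  qed
qed

end
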